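(* Any incline $R$ with $|R|\geq 3$ is not $k$-simple.
   Context: A semiring $(R,+,\cdot)$ is a set with two binary operations such that $(R,+)$ is a commutative semigroup, $(R,\cdot)$ is a semigroup, and multiplication distributes over addition from both sides; no zero or identity is assumed. An incline is a semiring with $r+r=r$ for all $r$ and $x+xy=x=x+yx$ for all $x,y\in R$. A zero of $R$ is an element $0$ with $0+r=r$ and $0r=r0=0$ for all $r\in R$. An ideal of $R$ is a nonempty subset $A\subseteq R$ with $a+b\in A$ and $ra,ar\in A$ for all $a,b\in A$, $r\in R$; the trivial ideals are $R$ and, if $R$ has a zero $0$, $\{0\}$. For an ideal $A$, its $k$-closure is $\overline{A}=\{x\in R\mid x+a=b \text{ for some } a,b\in A\}$, and $A$ is a $k$-ideal if $A=\overline{A}$. $R$ is $k$-simple if it has no $k$-ideals other than the trivial ideals. *)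

theory Defs
  imports Main
begin

definition semiring_ops :: "('a \<Rightarrow> 'a \<Rightarrow> 'a) \<Rightarrow> ('a \<Rightarrow> 'a \<Rightarrow> 'a) \<Rightarrow> bool" where
  "semiring_ops add mul \<longleftrightarrow>
     (\<forall>a b c. add (add a b) c = add a (add b c)) \<and>
     (\<forall>a b. add a b = add b a) \<and>
     (\<forall>a b c. mul (mul a b) c = mul a (mul b c)) \<and>
     (\<forall>a b c. mul a (add b c) = add (mul a b) (mul a c)) \<and>
     (\<forall>a b c. mul (add a b) c = add (mul a c) (mul b c))"

definition incline :: "('a \<Rightarrow> 'a \<Rightarrow> 'a) \<Rightarrow> ('a \<Rightarrow> 'a \<Rightarrow> 'a) \<Rightarrow> bool" where
  "incline add mul \<longleftrightarrow> semiring_ops add mul \<and>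
     (\<forall>r. add r r = r) \<and>
     (\<forall>x y. add x (mul x y) = x \<and> add x (mul y x) = x)"

definition is_zero :: "('a \<Rightarrow> 'a \<Rightarrow> 'a) \<Rightarrow> ('a \<Rightarrow> 'a \<Rightarrow> 'a) \<Rightarrow> 'a \<Rightarrow> bool" where
  "is_zero add mul z \<longleftrightarrow> (\<forall>r. add z r = r \<and> mul z r = z \<and> mul r z = z)"

definition sr_ideal :: "('a \<Rightarrow> 'a \<Rightarrow> 'a) \<Rightarrow> ('a \<Rightarrow> 'a \<Rightarrow> 'a) \<Rightarrow> 'a set \<Rightarrow> bool" where
  "sr_ideal add mul A \<longleftrightarrow> A \<noteq> {} \<and>
     (\<forall>a\<in>A. \<forall>b\<in>A. add a b \<in> A) \<and>
     (\<forall>a\<in>A. \<forall>r. mul r a \<in> A \<and> mul a r \<in> A)"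

definition trivial_ideal :: "('a \<Rightarrow> 'a \<Rightarrow> 'a) \<Rightarrow> ('a \<Rightarrow> 'a \<Rightarrow> 'a) \<Rightarrow> 'a set \<Rightarrow> bool" where
  "trivial_ideal add mul A \<longleftrightarrow> A = UNIV \<or> (\<exists>z. is_zero add mul z \<and> A = {z})"

definition k_closure :: "('a \<Rightarrow> 'a \<Rightarrow> 'a) \<Rightarrow> 'a set \<Rightarrow> 'a set" where
  "k_closure add A = {x. \<exists>a\<in>A. \<exists>b\<in>A. add x a = b}"

definition k_ideal :: "('a \<Rightarrow> 'a \<Rightarrow> 'a) \<Rightarrow> ('a \<Rightarrow> 'a \<Rightarrow> 'a) \<Rightarrow> 'a set \<Rightarrow> bool" where
  "k_ideal add mul A \<longleftrightarrow> sr_ideal add mul A \<and> A = k_closure add A"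

definition k_simple :: "('a \<Rightarrow> 'a \<Rightarrow> 'a) \<Rightarrow> ('a \<Rightarrow> 'a \<Rightarrow> 'a) \<Rightarrow> bool" where
  "k_simple add mul \<longleftrightarrow> (\<forall>A. k_ideal add mul A \<longrightarrow> trivial_ideal add mul A)"

end

theory Submission
  imports Defs
begin

text \<open>In an incline, addition is a join with \<open>x \<le> a \<longleftrightarrow> x + a = a\<close>, and every principal
  down-set \<open>\<down>a\<close> is a \<open>k\<close>-ideal: absorption puts \<open>ra\<close> and \<open>ar\<close> below \<open>a\<close>, and
  \<open>x + a' = b\<close> with \<open>a', b \<le> a\<close> forces \<open>x \<le> b \<le> a\<close>. If \<open>R\<close> were \<open>k\<close>-simple, each \<open>\<down>a\<close>
  would be \<open>R\<close> (so \<open>a\<close> is the top) or a singleton \<open>{0}\<close> (so \<open>a = 0\<close>, as \<open>a \<in> \<down>a\<close>). A top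
  and a zero are unique, so \<open>R\<close> would have at most two elements.\<close>

lemma incline_laws:
  assumes "incline add mul"
  shows incline_add_assoc: "add (add a b) c = add a (add b c)"
    and incline_add_commute: "add a b = add b a"
    and incline_add_idem: "add a a = a"
    and incline_absorb_right: "add x (mul x y) = x"
    and incline_absorb_left: "add x (mul y x) = x"
  using assms unfolding incline_def semiring_ops_def by blast+

definition down_set :: "('a \<Rightarrow> 'a \<Rightarrow> 'a) \<Rightarrow> 'a \<Rightarrow> 'a set" where
  "down_set add a = {x. add x a = a}"

lemma down_set_downward_closed:
  assumes "\<And>a b c. add (add a b) c = add a (add b c)"
    and "add x y = y" and "y \<in> down_set add a"
  shows "x \<in> down_set add a"
proof -
  have "add y a = a" using assms(3) unfolding down_set_def by simp
  then have "add x a = add (add x y) a" by (simp only: assms(1))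
  also have "\<dots> = a" using \<open>add x y = y\<close> \<open>add y a = a\<close> by simp
  finally show ?thesis unfolding down_set_def by simp
qed

lemma down_set_sr_ideal:
  assumes inc: "incline add mul"
  shows "sr_ideal add mul (down_set add a)"
  unfolding sr_ideal_def
proof (intro conjI ballI allI)
  show "down_set add a \<noteq> {}"
    using incline_add_idem[OF inc] unfolding down_set_def by auto
next
  fix x y assume "x \<in> down_set add a" "y \<in> down_set add a"
  then show "add x y \<in> down_set add a" by (simp add: down_set_def incline_add_assoc[OF inc])
next
  fix x r assume x: "x \<in> down_set add a"
  have "add (mul r x) x = x" "add (mul x r) x = x"
    using incline_absorb_left[OF inc] incline_absorb_right[OF inc]
      incline_add_commute[OF inc] by metis+
  then show "mul r x \<in> down_set add a" "mul x r \<in> down_set add a"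
    using down_set_downward_closed[OF incline_add_assoc[OF inc] _ x] by blast+
qed

lemma down_set_k_closed:
  assumes inc: "incline add mul"
  shows "k_closure add (down_set add a) = down_set add a"
proof
  show "down_set add a \<subseteq> k_closure add (down_set add a)"
    unfolding k_closure_def using incline_add_idem[OF inc] by blast
  show "k_closure add (down_set add a) \<subseteq> down_set add a"
  proof
    fix x assume "x \<in> k_closure add (down_set add a)"
    then obtain a' b where b: "b \<in> down_set add a" and sum: "add x a' = b"
      unfolding k_closure_def by blast
    have "add x b = add (add x x) a'"
      using sum by (simp only: incline_add_assoc[OF inc])
    then have "add x b = b"
      using sum by (simp only: incline_add_idem[OF inc])
    then show "x \<in> down_set add a"
      using down_set_downward_closed[OF incline_add_assoc[OF inc] _ b] by blast
  qed
qed

lemma down_set_k_ideal: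
  assumes "incline add mul"
  shows "k_ideal add mul (down_set add a)"
  unfolding k_ideal_def
  using down_set_sr_ideal[OF assms] down_set_k_closed[OF assms] by simp

lemma k_simple_incline_top_or_zero:
  assumes inc: "incline add mul" and "k_simple add mul"
  shows "(\<forall>x. add x a = a) \<or> is_zero add mul a"
proof -
  have "down_set add a = UNIV \<or> (\<exists>z. is_zero add mul z \<and> down_set add a = {z})"
    using assms down_set_k_ideal[OF inc] unfolding k_simple_def trivial_ideal_def by blast
  then show ?thesis
  proof
    assume "down_set add a = UNIV"
    then show ?thesis unfolding down_set_def by auto
  next
    assume "\<exists>z. is_zero add mul z \<and> down_set add a = {z}"
    then obtain z where "is_zero add mul z" "down_set add a = {z}" by blast
    moreover have "a \<in> down_set add a"
      using incline_add_idem[OF inc] unfolding down_set_def by simp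
    ultimately show ?thesis by simp
  qed
qed

lemma top_unique:
  assumes "add a b = add b a"
    and "\<forall>x. add x a = a" and "\<forall>x. add x b = b"
  shows "a = b"
  using assms by metis

lemma zero_unique:
  assumes "add z w = add w z"
    and "is_zero add mul z" and "is_zero add mul w"
  shows "z = w"
  using assms unfolding is_zero_def by metis

theorem lemma5p2:
  fixes add mul :: "'a \<Rightarrow> 'a \<Rightarrow> 'a"
  assumes "incline add mul"
    and "\<exists>a b c :: 'a. a \<noteq> b \<and> b \<noteq> c \<and> a \<noteq> c"
  shows "\<not> k_simple add mul"
proof
  assume "k_simple add mul"
  then have top_or_zero: "\<And>a. (\<forall>x. add x a = a) \<or> is_zero add mul a"
    using k_simple_incline_top_or_zero[OF assms(1)] by blast
  have at_most_two: "x = y \<or> y = z \<or> x = z" for x y z :: 'a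
  proof -
    have same_kind: "u = v"
      if "(\<forall>x. add x u = u) \<and> (\<forall>x. add x v = v) \<or> is_zero add mul u \<and> is_zero add mul v"
      for u v :: 'a
      using that top_unique[of add u v] zero_unique[of add u v mul]
        incline_add_commute[OF assms(1), of u v] by blast
    show ?thesis
      using top_or_zero[of x] top_or_zero[of y] top_or_zero[of z] same_kind by blast
  qed
  obtain a b c :: 'a where "a \<noteq> b" "b \<noteq> c" "a \<noteq> c"
    using assms(2) by blast
  then show False
    using at_most_two[of a b c] by blast
qed

end
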